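(* Let $1=i_1<i_2<\dots<i_m=2T+1$ be odd layers. Measure every qubit of $|\mathrm{ATG}\rangle$ in the $|\pm\rangle$ basis except the code vertices $q_{l,i_j}$ ($l\in[n]$, $j\in[m]$). Then each of the following operators on the unmeasured qubits, multiplied by a suitable product $X(\alpha)$ of Pauli $X$'s on measured qubits, is a stabilizer of $|\mathrm{ATG}\rangle$: (1) every $X$-check and every $Z$-check of $Q$ applied on layer $i_j$, for each $j\in[m]$; (2) $\bigotimes_{j=1}^m\bar X_{(i_j)}$ for each logical $X$ operator, and $\bar Z_{(i_j)}\otimes\bar Z_{(i_{j+1})}$ for each logical $Z$ operator and each $j\in[m-1]$. Consequently, for every measurement outcome $s$, the post-measurement state of the unmeasured qubits is an eigenstate of each of these operators with eigenvalue $(-1)^{s\cdot\alpha}$, and hence equals the encoded state $|\overline{\mathrm{GHZ}_m^{\otimes k}}\rangle$ up to a Pauli correction.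
   Context: A CSS code $Q=(H^X,H^Z)$ is given by full-rank matrices $H^X\in\mathbb F_2^{m_x\times n}$, $H^Z\in\mathbb F_2^{m_z\times n}$ with $H^X(H^Z)^T=0$, with $k=n-m_x-m_z$ logical qubits. Write $i\sim c$ if qubit $i$ is in the support of check $c$. For a logical $X$ (resp. $Z$) operator of $Q$ with support $\alpha_x$ (resp. $\alpha_z$), $\bar X_{(t)}=\prod_{i\in\alpha_x}X_{q_{i,t}}$ and $\bar Z_{(t)}=\prod_{i\in\alpha_z}Z_{q_{i,t}}$. The Alternating Tanner Graph (ATG): fix $T\ge1$. Graph $G=(V,E)$ with code vertices $q_{i,t}$ ($i\in[n]$, $t\in[2T+1]$); Z-check vertices $z_{c,t}$ ($c\in[m_z]$, $t$ odd in $[2T+1]$); X-check vertices $x_{c,t}$ ($c\in[m_x]$, $t$ even in $[2T]$). Edges: $q_{i,t}q_{i,t+1}$ for $t\in[2T]$; $q_{i,t}z_{c,t}$ for odd $t$ whenever $H^Z_{c,i}=1$; $q_{i,t}x_{c,t}$ for even $t$ whenever $H^X_{c,i}=1$. $|\mathrm{ATG}\rangle=\prod_{(u,v)\in E}CZ_{u,v}|+\rangle^{\otimes V}$, with stabilizer generators $G_u=X_u\prod_{v:(u,v)\in E}Z_v$. $|\mathrm{GHZ}_m\rangle=\frac1{\sqrt2}(|0\rangle^{\otimes m}+|1\rangle^{\otimes m})$. $|\overline{\mathrm{GHZ}_m^{\otimes k}}\rangle$ denotes the state of $m$ code blocks of $Q$ (layers $i_1,\dots,i_m$) in which, for each $j\in[k]$,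 the $j$-th logical qubits of the $m$ blocks form a GHZ state; it is stabilized by the checks of $Q$ on each block, by $\bigotimes_{a}\bar X_{j,(i_a)}$ and by $\bar Z_{j,(i_a)}\otimes\bar Z_{j,(i_{a+1})}$. *)

theory Defs
  imports Complex_Main
begin

section \<open>CSS codes over F_2 (check matrices as Boolean functions, rows c, columns i)\<close>

definition f2_full_row_rank :: "(nat \<Rightarrow> nat \<Rightarrow> bool) \<Rightarrow> nat \<Rightarrow> nat \<Rightarrow> bool" where
  "f2_full_row_rank H m n \<longleftrightarrow>
     (\<forall>S \<subseteq> {..<m}. S \<noteq> {} \<longrightarrow> (\<exists>i<n. odd (card {c\<in>S. H c i})))"

definition css_orthogonal ::
  "(nat \<Rightarrow> nat \<Rightarrow> bool) \<Rightarrow> (nat \<Rightarrow> nat \<Rightarrow> bool) \<Rightarrow> nat \<Rightarrow> nat \<Rightarrow> nat \<Rightarrow> bool" where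
  "css_orthogonal HX HZ mx mz n \<longleftrightarrow>
     (\<forall>c<mx. \<forall>c'<mz. even (card {i\<in>{..<n}. HX c i \<and> HZ c' i}))"

definition css_code ::
  "(nat \<Rightarrow> nat \<Rightarrow> bool) \<Rightarrow> (nat \<Rightarrow> nat \<Rightarrow> bool) \<Rightarrow> nat \<Rightarrow> nat \<Rightarrow> nat \<Rightarrow> bool" where
  "css_code HX HZ mx mz n \<longleftrightarrow>
     f2_full_row_rank HX mx n \<and> f2_full_row_rank HZ mz n \<and> css_orthogonal HX HZ mx mz n"

definition f2_rowspace :: "(nat \<Rightarrow> nat \<Rightarrow> bool) \<Rightarrow> nat \<Rightarrow> nat \<Rightarrow> nat set set" where
  "f2_rowspace H m n = {{i. i < n \<and> odd (card {c\<in>S. H c i})} | S. S \<subseteq> {..<m}}"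

definition logical_X_support ::
  "(nat \<Rightarrow> nat \<Rightarrow> bool) \<Rightarrow> (nat \<Rightarrow> nat \<Rightarrow> bool) \<Rightarrow> nat \<Rightarrow> nat \<Rightarrow> nat \<Rightarrow> nat set \<Rightarrow> bool" where
  "logical_X_support HX HZ mx mz n \<alpha> \<longleftrightarrow>
     \<alpha> \<subseteq> {..<n} \<and> (\<forall>c<mz. even (card {i\<in>\<alpha>. HZ c i})) \<and> \<alpha> \<notin> f2_rowspace HX mx n"

definition logical_Z_support ::
  "(nat \<Rightarrow> nat \<Rightarrow> bool) \<Rightarrow> (nat \<Rightarrow> nat \<Rightarrow> bool) \<Rightarrow> nat \<Rightarrow> nat \<Rightarrow> nat \<Rightarrow> nat set \<Rightarrow> bool" where
  "logical_Z_support HX HZ mx mz n \<alpha> \<longleftrightarrow>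
     \<alpha> \<subseteq> {..<n} \<and> (\<forall>c<mx. even (card {i\<in>\<alpha>. HX c i})) \<and> \<alpha> \<notin> f2_rowspace HZ mz n"

text \<open>A state on qubits of type 'v is a function from computational basis states
  (identified with the set of qubits in state 1) to complex amplitudes.\<close>
type_synonym 'v state = "'v set \<Rightarrow> complex"

definition symdiff :: "'v set \<Rightarrow> 'v set \<Rightarrow> 'v set" where
  "symdiff A B = (A - B) \<union> (B - A)"

text \<open>The Pauli operator X(a) Z(b) (X on qubits in a, Z on qubits in b; b finite):
  X(a)Z(b) |y> = (-1)^{|b \<inter> y|} |y xor a>.\<close>
definition pauli :: "'v set \<Rightarrow> 'v set \<Rightarrow> 'v state \<Rightarrow> 'v state" where
  "pauli a b \<psi> = (\<lambda>S. (-1) ^ card (b \<inter> symdiff S a) * \<psi> (symdiff S a))"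

text \<open>Graph state prod_{e\<in>E} CZ_e |+>^{\<otimes>V}; E is a set of 2-element subsets of V.\<close>
definition graph_state :: "'v set \<Rightarrow> 'v set set \<Rightarrow> 'v state" where
  "graph_state V E = (\<lambda>S. if S \<subseteq> V
      then (-1) ^ card {e\<in>E. e \<subseteq> S} / complex_of_real (sqrt (2 ^ card V)) else 0)"

text \<open>Unnormalised post-measurement state on the unmeasured qubits V - M after measuring
  each qubit of M in the |+>,|-> basis with outcome s \<subseteq> M (v \<in> s means outcome |->),
  i.e. (<s|_M \<otimes> I) \<psi>.\<close>
definition post_meas :: "'v set \<Rightarrow> 'v set \<Rightarrow> 'v state \<Rightarrow> 'v set \<Rightarrow> 'v state" where
  "post_meas V M \<psi> s = (\<lambda>Y. if Y \<subseteq> V - M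
      then (\<Sum>Z\<in>Pow M. (-1) ^ card (s \<inter> Z) / complex_of_real (sqrt (2 ^ card M)) * \<psi> (Y \<union> Z))
      else 0)"

datatype vtx = Qv nat nat | Zv nat nat | Xv nat nat
  (* Qv i t = q_{i,t};  Zv c t = z_{c,t};  Xv c t = x_{c,t}; layers t are 1-based *)

definition atg_V :: "nat \<Rightarrow> nat \<Rightarrow> nat \<Rightarrow> nat \<Rightarrow> vtx set" where
  "atg_V n mx mz T =
     {Qv i t | i t. i < n \<and> 1 \<le> t \<and> t \<le> 2*T+1}
   \<union> {Zv c t | c t. c < mz \<and> odd t \<and> 1 \<le> t \<and> t \<le> 2*T+1}
   \<union> {Xv c t | c t. c < mx \<and> even t \<and> 1 \<le> t \<and> t \<le> 2*T}"

definition atg_E ::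
  "(nat \<Rightarrow> nat \<Rightarrow> bool) \<Rightarrow> (nat \<Rightarrow> nat \<Rightarrow> bool) \<Rightarrow> nat \<Rightarrow> nat \<Rightarrow> nat \<Rightarrow> nat \<Rightarrow> vtx set set" where
  "atg_E HX HZ n mx mz T =
     {{Qv i t, Qv i (t+1)} | i t. i < n \<and> 1 \<le> t \<and> t \<le> 2*T}
   \<union> {{Qv i t, Zv c t} | i c t. i < n \<and> c < mz \<and> odd t \<and> 1 \<le> t \<and> t \<le> 2*T+1 \<and> HZ c i}
   \<union> {{Qv i t, Xv c t} | i c t. i < n \<and> c < mx \<and> even t \<and> 1 \<le> t \<and> t \<le> 2*T \<and> HX c i}"

definition atg_state ::
  "(nat \<Rightarrow> nat \<Rightarrow> bool) \<Rightarrow> (nat \<Rightarrow> nat \<Rightarrow> bool) \<Rightarrow> nat \<Rightarrow> nat \<Rightarrow> nat \<Rightarrow> nat \<Rightarrow> vtx state" where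
  "atg_state HX HZ n mx mz T = graph_state (atg_V n mx mz T) (atg_E HX HZ n mx mz T)"

text \<open>Unmeasured qubits: code vertices q_{l,i_j}, l \<in> [n], j \<in> [m]
  (the layers i_1,...,i_m are given by lay 1, ..., lay m).\<close>
definition unmeasured :: "nat \<Rightarrow> nat \<Rightarrow> (nat \<Rightarrow> nat) \<Rightarrow> vtx set" where
  "unmeasured n m lay = {Qv l (lay j) | l j. l < n \<and> 1 \<le> j \<and> j \<le> m}"

text \<open>The operators (as pairs (a,b) meaning X(a)Z(b)) on the unmeasured qubits listed in
  items (1) and (2): X- and Z-checks on each layer i_j; the product over all layers of a
  logical X; and logical Z on two consecutive layers i_j, i_{j+1}.\<close>
definition ghz_ops ::
  "(nat \<Rightarrow> nat \<Rightarrow> bool) \<Rightarrow> (nat \<Rightarrow> nat \<Rightarrow> bool) \<Rightarrow> nat \<Rightarrow> nat \<Rightarrow> nat \<Rightarrow> nat \<Rightarrow> (nat \<Rightarrow> nat)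
     \<Rightarrow> (vtx set \<times> vtx set) set" where
  "ghz_ops HX HZ n mx mz m lay =
     {({Qv i (lay j) | i. i < n \<and> HX c i}, {}) | c j. c < mx \<and> 1 \<le> j \<and> j \<le> m}
   \<union> {({}, {Qv i (lay j) | i. i < n \<and> HZ c i}) | c j. c < mz \<and> 1 \<le> j \<and> j \<le> m}
   \<union> {({Qv i (lay j) | i j. i \<in> \<alpha> \<and> 1 \<le> j \<and> j \<le> m}, {}) | \<alpha>.
         logical_X_support HX HZ mx mz n \<alpha>}
   \<union> {({}, {Qv i (lay j) | i. i \<in> \<alpha>} \<union> {Qv i (lay (j+1)) | i. i \<in> \<alpha>}) | \<alpha> j.
         logical_Z_support HX HZ mx mz n \<alpha> \<and> 1 \<le> j \<and> j < m}"

text \<open>A state of the m code blocks (layers i_1..i_m) is the encoded state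
  |GHZ_m^{\<otimes>k}> (up to normalisation) iff it is stabilised by all these operators.\<close>
definition is_encoded_ghz ::
  "(nat \<Rightarrow> nat \<Rightarrow> bool) \<Rightarrow> (nat \<Rightarrow> nat \<Rightarrow> bool) \<Rightarrow> nat \<Rightarrow> nat \<Rightarrow> nat \<Rightarrow> nat \<Rightarrow> (nat \<Rightarrow> nat)
     \<Rightarrow> vtx state \<Rightarrow> bool" where
  "is_encoded_ghz HX HZ n mx mz m lay \<phi> \<longleftrightarrow>
     (\<forall>(a, b) \<in> ghz_ops HX HZ n mx mz m lay. pauli a b \<phi> = \<phi>)"

end

theory Submission
  imports Defs
begin

text \<open>A graph state is stabilised by X(A) Z(B) whenever A is an independent set and B is the set
  of vertices with an odd number of neighbours in A. Each operator in (1) and (2) becomes such a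
  stabiliser of the ATG once it is completed by X's on measured vertices: the Z-check vertex z_{c,t};
  the X-check vertices x_{c,t-1}, x_{c,t+1}; the logical X-support on every other odd layer; the
  support of the logical Z on the even layers strictly between two consecutive kept layers. The
  orthogonality of the checks and the commutation of logicals with checks make every check vertex
  see an even number of these X's. Measuring the completion vertices in the X basis turns X(\<alpha>)
  into the sign (-1)^(s\<cdot>\<alpha>). Finally, a state that is an eigenvector of operators each of pure
  X or pure Z type is moved into their common +1 eigenspace by a single Pauli X(Y0) Z(W), with Y0
  a basis state in its support and W a non-vanishing Walsh coefficient.\<close>

lemma mem_symdiff [simp]: "x \<in> symdiff A B \<longleftrightarrow> (x \<in> A) \<noteq> (x \<in> B)"
  by (auto simp: symdiff_def)

lemma symdiff_symdiff_cancel [simp]: "symdiff (symdiff A B) B = A"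
  by (auto simp: symdiff_def)

lemma symdiff_empty_right [simp]: "symdiff A {} = A"
  by (auto simp: symdiff_def)

lemma symdiff_right_commute: "symdiff (symdiff A B) C = symdiff (symdiff A C) B"
  by (auto simp: symdiff_def)

lemma symdiff_subset_iff: "B \<subseteq> V \<Longrightarrow> symdiff A B \<subseteq> V \<longleftrightarrow> A \<subseteq> V"
  unfolding subset_iff by (metis mem_symdiff)

lemma sum_Pow_symdiff_shift:
  assumes "D \<subseteq> U"
  shows "(\<Sum>Z\<in>Pow U. g (symdiff Z D)) = (\<Sum>Z\<in>Pow U. g Z)"
  by (rule sum.reindex_bij_witness[where i = "\<lambda>Z. symdiff Z D" and j = "\<lambda>Z. symdiff Z D"])
    (use assms in auto)

lemma minus_one_power_eq_if_even_add:
  "even (x + y) \<Longrightarrow> (-1::'a::ring_1) ^ x = (-1) ^ y"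
  by (cases "even x") (auto simp: minus_one_power_iff)

lemma even_card_symdiff_add:
  assumes "finite X" "finite Y"
  shows "even (card (symdiff X Y) + card X + card Y)"
proof -
  have "card (symdiff X Y) = card (X - Y) + card (Y - X)"
    unfolding symdiff_def using assms by (intro card_Un_disjoint) auto
  moreover have "card X = card (X \<inter> Y) + card (X - Y)"
    using assms(1) by (rule card_Int_Diff)
  moreover have "card Y = card (X \<inter> Y) + card (Y - X)"
    using card_Int_Diff[OF assms(2), of X] by (simp add: Int_commute)
  ultimately show ?thesis by presburger
qed

lemma minus_one_power_card_Int_symdiff:
  assumes "finite B"
  shows "(-1::'a::ring_1) ^ card (B \<inter> symdiff X Y) = (-1) ^ card (B \<inter> X) * (-1) ^ card (B \<inter> Y)"
proof -
  have "B \<inter> symdiff X Y = symdiff (B \<inter> X) (B \<inter> Y)" by auto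
  then have "even (card (B \<inter> symdiff X Y) + (card (B \<inter> X) + card (B \<inter> Y)))"
    using even_card_symdiff_add[of "B \<inter> X" "B \<inter> Y"] assms by (simp add: add.assoc)
  then have "(-1::'a) ^ card (B \<inter> symdiff X Y) = (-1) ^ (card (B \<inter> X) + card (B \<inter> Y))"
    by (rule minus_one_power_eq_if_even_add)
  then show ?thesis by (simp add: power_add)
qed

text \<open>Modulo 2, toggling an independent set A changes the number of edges inside S by the
  number of edges between S and A.\<close>
lemma even_card_edges_symdiff:
  fixes E :: "'v set set"
  assumes finS: "finite S" and finA: "finite A" and finE: "finite E"
    and doubletons: "\<forall>e\<in>E. \<exists>u u'. u \<noteq> u' \<and> e = {u, u'}"
    and indep: "\<forall>u\<in>A. \<forall>v\<in>A. {u, v} \<notin> E"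
  shows "even (card {e\<in>E. e \<subseteq> symdiff S A} + card {e\<in>E. e \<subseteq> S}
    + (\<Sum>w\<in>S. card {v\<in>A. {w, v} \<in> E}))"
proof -
  let ?ind = "\<lambda>P. if P then 1 else (0::nat)"
  let ?pairs = "\<lambda>e. \<Sum>p\<in>S \<times> A. ?ind (e = {fst p, snd p})"
  have card_filter: "card {x\<in>X. P x} = (\<Sum>x\<in>X. ?ind (P x))" if "finite X" for X :: "'a set" and P
    unfolding card_eq_sum using sum.inter_filter[OF that, of "\<lambda>_. 1" P] .
  have "(\<Sum>w\<in>S. card {v\<in>A. {w, v} \<in> E}) = (\<Sum>p\<in>S \<times> A. ?ind ({fst p, snd p} \<in> E))"
    by (simp only: card_filter[OF finA] sum.cartesian_product case_prod_beta')
  also have "\<dots> = (\<Sum>p\<in>S \<times> A. \<Sum>e\<in>E. ?ind (e = {fst p, snd p}))"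
    using finE by (simp add: sum.delta')
  also have "\<dots> = (\<Sum>e\<in>E. ?pairs e)"
    by (rule sum.swap)
  finally have degrees: "(\<Sum>w\<in>S. card {v\<in>A. {w, v} \<in> E}) = (\<Sum>e\<in>E. ?pairs e)" .
  have per_edge: "even (?ind (e \<subseteq> symdiff S A) + ?ind (e \<subseteq> S) + ?pairs e)" if "e \<in> E" for e
  proof -
    obtain u u' where e: "u \<noteq> u'" "e = {u, u'}" using doubletons \<open>e \<in> E\<close> by blast
    have "e = {fst p, snd p} \<longleftrightarrow> p = (u, u') \<or> p = (u', u)" for p
      using e by (cases p) (auto simp: doubleton_eq_iff)
    then have "?ind (e = {fst p, snd p}) = ?ind (p = (u, u')) + ?ind (p = (u', u))" for p
      using e(1) by auto
    then have "?pairs e = ?ind ((u, u') \<in> S \<times> A) + ?ind ((u', u) \<in> S \<times> A)"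
      by (simp only: sum.distrib sum.delta[OF finite_cartesian_product[OF finS finA]])
    moreover have "\<not> (u \<in> A \<and> u' \<in> A)" using indep \<open>e \<in> E\<close> e by auto
    ultimately show ?thesis using e by auto
  qed
  have "card {e\<in>E. e \<subseteq> symdiff S A} + card {e\<in>E. e \<subseteq> S} + (\<Sum>w\<in>S. card {v\<in>A. {w, v} \<in> E})
      = (\<Sum>e\<in>E. ?ind (e \<subseteq> symdiff S A) + ?ind (e \<subseteq> S) + ?pairs e)"
    by (simp only: card_filter[OF finE] degrees sum.distrib)
  also have "even \<dots>" using per_edge by (simp add: dvd_sum)
  finally show ?thesis .
qed

lemma graph_state_stabilizer:
  fixes V :: "'v set" and E :: "'v set set"
  assumes finV: "finite V" and finE: "finite E"
    and doubletons: "\<forall>e\<in>E. \<exists>u u'. u \<noteq> u' \<and> e = {u, u'}"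
    and AV: "A \<subseteq> V" and BV: "B \<subseteq> V"
    and indep: "\<forall>u\<in>A. \<forall>v\<in>A. {u, v} \<notin> E"
    and odd_nbhd: "\<forall>w\<in>V. w \<in> B \<longleftrightarrow> odd (card {v\<in>A. {w, v} \<in> E})"
  shows "pauli A B (graph_state V E) = graph_state V E"
proof
  fix S
  show "pauli A B (graph_state V E) S = graph_state V E S"
  proof (cases "S \<subseteq> V")
    case False
    then have "\<not> symdiff S A \<subseteq> V" using symdiff_subset_iff[OF AV] by blast
    with False show ?thesis by (simp add: pauli_def graph_state_def)
  next
    case True
    have finS: "finite S" and finA: "finite A" and finB: "finite B"
      using True AV BV finV finite_subset by blast+
    have "u \<notin> B" if "u \<in> A" for u
    proof -
      have "u \<in> B \<longleftrightarrow> odd (card {v\<in>A. {u, v} \<in> E})" using odd_nbhd AV that by blast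
      also have "{v\<in>A. {u, v} \<in> E} = {}" using indep that by blast
      finally show ?thesis by simp
    qed
    then have "B \<inter> A = {}" by blast
    then have sign_B: "(-1::complex) ^ card (B \<inter> symdiff S A) = (-1) ^ card (B \<inter> S)"
      by (simp add: minus_one_power_card_Int_symdiff[OF finB])
    have "B \<inter> S = {w\<in>S. odd (card {v\<in>A. {w, v} \<in> E})}"
      using odd_nbhd True BV by auto
    then have "even (card (B \<inter> S) + (\<Sum>w\<in>S. card {v\<in>A. {w, v} \<in> E}))"
      using even_sum_iff[OF finS, of "\<lambda>w. card {v\<in>A. {w, v} \<in> E}"] by simp
    then have "even (card (B \<inter> S) + card {e\<in>E. e \<subseteq> symdiff S A} + card {e\<in>E. e \<subseteq> S})"
      using even_card_edges_symdiff[OF finS finA finE doubletons indep] by presburger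
    then have "(-1::complex) ^ (card (B \<inter> S) + card {e\<in>E. e \<subseteq> symdiff S A})
        = (-1) ^ card {e\<in>E. e \<subseteq> S}"
      by (rule minus_one_power_eq_if_even_add)
    then show ?thesis
      using True symdiff_subset_iff[OF AV] by (simp add: pauli_def graph_state_def sign_B power_add)
  qed
qed

text \<open>Reindexing the sum over the measured basis states by Z \<mapsto> Z \<oplus> \<alpha> absorbs the X(\<alpha>) part of
  the stabiliser into the sign of the outcome s.\<close>
lemma post_meas_pauli_eigenvector:
  fixes \<psi> :: "'v state"
  assumes finM: "finite M"
    and aU: "a \<subseteq> V - M" and bU: "b \<subseteq> V - M" and \<alpha>M: "\<alpha> \<subseteq> M" and sM: "s \<subseteq> M"
    and stab: "pauli (a \<union> \<alpha>) b \<psi> = \<psi>"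
  shows "pauli a b (post_meas V M \<psi> s) = (\<lambda>Y. (-1) ^ card (s \<inter> \<alpha>) * post_meas V M \<psi> s Y)"
proof
  fix Y
  define c where "c Z = (-1::complex) ^ card (s \<inter> Z) / complex_of_real (sqrt (2 ^ card M))" for Z
  show "pauli a b (post_meas V M \<psi> s) Y = (-1) ^ card (s \<inter> \<alpha>) * post_meas V M \<psi> s Y"
  proof (cases "Y \<subseteq> V - M")
    case False
    then have "\<not> symdiff Y a \<subseteq> V - M" using symdiff_subset_iff[OF aU] by blast
    with False show ?thesis by (simp add: pauli_def post_meas_def)
  next
    case True
    define Y' where "Y' = symdiff Y a"
    have \<psi>_shift: "\<psi> (Y \<union> Z) = (-1) ^ card (b \<inter> Y') * \<psi> (Y' \<union> symdiff Z \<alpha>)" if "Z \<subseteq> M" for Z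
    proof -
      have "symdiff (Y \<union> Z) (a \<union> \<alpha>) = Y' \<union> symdiff Z \<alpha>"
        and "b \<inter> (Y' \<union> symdiff Z \<alpha>) = b \<inter> Y'"
        using True aU bU \<alpha>M that unfolding Y'_def symdiff_def by blast+
      then show ?thesis using fun_cong[OF stab, of "Y \<union> Z"] by (simp add: pauli_def)
    qed
    have c_shift: "c (symdiff Z \<alpha>) = (-1) ^ card (s \<inter> \<alpha>) * c Z" for Z
      using minus_one_power_card_Int_symdiff[OF finite_subset[OF sM finM], of Z \<alpha>]
      unfolding c_def by (simp add: mult.commute)
    have "(\<Sum>Z\<in>Pow M. c Z * \<psi> (Y' \<union> Z)) = (\<Sum>Z\<in>Pow M. c (symdiff Z \<alpha>) * \<psi> (Y' \<union> symdiff Z \<alpha>))"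
      by (rule sum_Pow_symdiff_shift[OF \<alpha>M, of "\<lambda>Z. c Z * \<psi> (Y' \<union> Z)", symmetric])
    also have "\<dots> = (-1) ^ card (s \<inter> \<alpha>) * (-1) ^ card (b \<inter> Y') * (\<Sum>Z\<in>Pow M. c Z * \<psi> (Y \<union> Z))"
      unfolding sum_distrib_left by (rule sum.cong) (simp_all add: c_shift \<psi>_shift mult_ac)
    finally show ?thesis
      using True symdiff_subset_iff[OF aU] unfolding Y'_def
      by (simp add: pauli_def post_meas_def c_def mult_ac)
  qed
qed

definition walsh_coeff :: "'v set \<Rightarrow> 'v state \<Rightarrow> 'v set \<Rightarrow> complex" where
  "walsh_coeff U \<phi> W = (\<Sum>Y\<in>Pow U. (-1) ^ card (W \<inter> Y) * \<phi> Y)"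

lemma sum_Pow_minus_one_power_card_Int:
  assumes finU: "finite U" and DU: "D \<subseteq> U"
  shows "(\<Sum>W\<in>Pow U. (-1::complex) ^ card (W \<inter> D)) = (if D = {} then 2 ^ card U else 0)"
proof (cases "D = {}")
  case True
  then show ?thesis using finU by (simp add: card_Pow)
next
  case False
  then obtain d where d: "d \<in> D" by blast
  have finD: "finite D" using finU DU finite_subset by blast
  have flip: "(-1::complex) ^ card (symdiff W {d} \<inter> D) = - ((-1) ^ card (W \<inter> D))" for W
    using minus_one_power_card_Int_symdiff[OF finD, of W "{d}"] d by (simp add: Int_commute)
  have "(\<Sum>W\<in>Pow U. (-1::complex) ^ card (W \<inter> D)) = (\<Sum>W\<in>Pow U. (-1) ^ card (symdiff W {d} \<inter> D))"
    by (rule sum_Pow_symdiff_shift[symmetric]) (use d DU in auto)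
  also have "\<dots> = - (\<Sum>W\<in>Pow U. (-1) ^ card (W \<inter> D))"
    by (simp add: flip sum_negf)
  finally show ?thesis using False by simp
qed

lemma walsh_inversion:
  assumes finU: "finite U" and Y0: "Y0 \<subseteq> U"
  shows "(\<Sum>W\<in>Pow U. (-1) ^ card (W \<inter> Y0) * walsh_coeff U \<phi> W) = 2 ^ card U * \<phi> Y0"
proof -
  have "(\<Sum>W\<in>Pow U. (-1) ^ card (W \<inter> Y0) * walsh_coeff U \<phi> W)
      = (\<Sum>W\<in>Pow U. \<Sum>Y\<in>Pow U. (-1) ^ card (W \<inter> symdiff Y0 Y) * \<phi> Y)"
    unfolding walsh_coeff_def sum_distrib_left
    by (intro sum.cong refl) (simp add: minus_one_power_card_Int_symdiff finite_subset[OF _ finU] mult.assoc)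
  also have "\<dots> = (\<Sum>Y\<in>Pow U. (\<Sum>W\<in>Pow U. (-1) ^ card (W \<inter> symdiff Y0 Y)) * \<phi> Y)"
    by (subst sum.swap) (simp add: sum_distrib_right)
  also have "\<dots> = (\<Sum>Y\<in>Pow U. if Y = Y0 then 2 ^ card U * \<phi> Y0 else 0)"
  proof (intro sum.cong refl)
    fix Y assume "Y \<in> Pow U"
    then have "symdiff Y0 Y \<subseteq> U" using Y0 by auto
    moreover have "symdiff Y0 Y = {} \<longleftrightarrow> Y = Y0" by (auto simp: symdiff_def)
    ultimately show "(\<Sum>W\<in>Pow U. (-1) ^ card (W \<inter> symdiff Y0 Y)) * \<phi> Y
        = (if Y = Y0 then 2 ^ card U * \<phi> Y0 else 0)"
      by (simp add: sum_Pow_minus_one_power_card_Int[OF finU])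
  qed
  also have "\<dots> = 2 ^ card U * \<phi> Y0" using finU Y0 by simp
  finally show ?thesis .
qed

lemma walsh_coeff_nonzero:
  assumes "finite U" "Y0 \<subseteq> U" "\<phi> Y0 \<noteq> 0"
  shows "\<exists>W\<subseteq>U. walsh_coeff U \<phi> W \<noteq> 0"
proof (rule ccontr)
  assume "\<not> ?thesis"
  then have "(\<Sum>W\<in>Pow U. (-1) ^ card (W \<inter> Y0) * walsh_coeff U \<phi> W) = 0" by simp
  with walsh_inversion[OF assms(1,2)] assms(3) show False by simp
qed

text \<open>A non-vanishing Walsh coefficient at W forces the eigenvalue c = (-1)^|W \<inter> a|, which
  Z(W) cancels.\<close>
lemma pauli_X_stabilizes_corrected_state:
  assumes finU: "finite U" and aU: "a \<subseteq> U" and WU: "W \<subseteq> U"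
    and eig: "pauli a {} \<phi> = (\<lambda>Y. c * \<phi> Y)"
    and walsh: "walsh_coeff U \<phi> W \<noteq> 0"
  shows "pauli a {} (pauli Y0 W \<phi>) = pauli Y0 W \<phi>"
proof
  fix S
  have finW: "finite W" using finite_subset[OF WU finU] .
  have shift: "\<phi> (symdiff Y a) = c * \<phi> Y" for Y
    using fun_cong[OF eig, of Y] by (simp add: pauli_def)
  have "walsh_coeff U \<phi> W = (\<Sum>Y\<in>Pow U. (-1) ^ card (W \<inter> symdiff Y a) * \<phi> (symdiff Y a))"
    unfolding walsh_coeff_def by (rule sum_Pow_symdiff_shift[OF aU, symmetric])
  also have "\<dots> = ((-1) ^ card (W \<inter> a) * c) * walsh_coeff U \<phi> W"
    unfolding walsh_coeff_def sum_distrib_left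
    by (intro sum.cong refl) (simp add: shift minus_one_power_card_Int_symdiff[OF finW] mult_ac)
  finally have sign: "(-1) ^ card (W \<inter> a) * c = 1"
    using walsh by simp
  have "pauli a {} (pauli Y0 W \<phi>) S
      = ((-1) ^ card (W \<inter> a) * c) * ((-1) ^ card (W \<inter> symdiff S Y0) * \<phi> (symdiff S Y0))"
    by (simp add: pauli_def shift symdiff_right_commute[of S a]
        minus_one_power_card_Int_symdiff[OF finW, of "symdiff S Y0" a] mult_ac)
  also have "\<dots> = pauli Y0 W \<phi> S" by (simp add: sign pauli_def)
  finally show "pauli a {} (pauli Y0 W \<phi>) S = pauli Y0 W \<phi> S" .
qed

text \<open>Evaluating at a point Y0 of the support forces c = (-1)^|b \<inter> Y0|, which X(Y0) cancels.\<close>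
lemma pauli_Z_stabilizes_corrected_state:
  assumes finb: "finite b"
    and eig: "pauli {} b \<phi> = (\<lambda>Y. c * \<phi> Y)"
    and nonzero: "\<phi> Y0 \<noteq> 0"
  shows "pauli {} b (pauli Y0 W \<phi>) = pauli Y0 W \<phi>"
proof
  fix S
  have sign: "(-1) ^ card (b \<inter> Y) * \<phi> Y = c * \<phi> Y" for Y
    using fun_cong[OF eig, of Y] by (simp add: pauli_def)
  then have c: "c = (-1) ^ card (b \<inter> Y0)"
    using nonzero by (metis mult_cancel_right)
  have "(-1) ^ card (b \<inter> S) * \<phi> (symdiff S Y0)
      = (-1) ^ card (b \<inter> symdiff S Y0) * (-1) ^ card (b \<inter> Y0) * \<phi> (symdiff S Y0)"
    using minus_one_power_card_Int_symdiff[OF finb, of "symdiff S Y0" Y0]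
    unfolding symdiff_symdiff_cancel by (rule arg_cong[where f = "\<lambda>z. z * \<phi> (symdiff S Y0)"])
  also have "\<dots> = (-1) ^ card (b \<inter> Y0) * ((-1) ^ card (b \<inter> symdiff S Y0) * \<phi> (symdiff S Y0))"
    by (simp only: ac_simps)
  also have "\<dots> = \<phi> (symdiff S Y0)"
    by (simp add: sign c)
  finally have flip: "(-1) ^ card (b \<inter> S) * \<phi> (symdiff S Y0) = \<phi> (symdiff S Y0)" .
  have "pauli {} b (pauli Y0 W \<phi>) S
      = (-1) ^ card (W \<inter> symdiff S Y0) * ((-1) ^ card (b \<inter> S) * \<phi> (symdiff S Y0))"
    by (simp add: pauli_def mult_ac)
  also have "\<dots> = pauli Y0 W \<phi> S"
    by (simp add: flip pauli_def)
  finally show "pauli {} b (pauli Y0 W \<phi>) S = pauli Y0 W \<phi> S" .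
qed

lemma pauli_correction_exists:
  fixes \<phi> :: "'v state" and Ops :: "('v set \<times> 'v set) set"
  assumes finU: "finite U" and supp: "\<forall>Y. \<not> Y \<subseteq> U \<longrightarrow> \<phi> Y = 0"
    and ops: "\<And>a b. (a, b) \<in> Ops \<Longrightarrow> a \<subseteq> U \<and> b \<subseteq> U \<and> (a = {} \<or> b = {})
      \<and> (\<exists>c. pauli a b \<phi> = (\<lambda>Y. c * \<phi> Y))"
  shows "\<exists>Y0 W. Y0 \<subseteq> U \<and> W \<subseteq> U \<and> (\<forall>(a, b)\<in>Ops. pauli a b (pauli Y0 W \<phi>) = pauli Y0 W \<phi>)"
proof (cases "\<exists>Y0. \<phi> Y0 \<noteq> 0")
  case False
  then have "\<phi> = (\<lambda>_. 0)" by auto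
  then show ?thesis by (intro exI[of _ "{}"]) (simp add: pauli_def)
next
  case True
  then obtain Y0 where nonzero: "\<phi> Y0 \<noteq> 0" by blast
  with supp have Y0U: "Y0 \<subseteq> U" by blast
  obtain W where WU: "W \<subseteq> U" and walsh: "walsh_coeff U \<phi> W \<noteq> 0"
    using walsh_coeff_nonzero[of U Y0 \<phi>] finU Y0U nonzero by blast
  have "pauli a b (pauli Y0 W \<phi>) = pauli Y0 W \<phi>" if ab: "(a, b) \<in> Ops" for a b
  proof -
    obtain c where aU: "a \<subseteq> U" and bU: "b \<subseteq> U" and "a = {} \<or> b = {}"
      and eig: "pauli a b \<phi> = (\<lambda>Y. c * \<phi> Y)"
      using ops[OF ab] by blast
    then consider "b = {}" | "a = {}" by blast
    then show ?thesis
    proof cases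
      case 1
      with eig show ?thesis
        using pauli_X_stabilizes_corrected_state[OF finU aU WU _ walsh] by simp
    next
      case 2
      with eig show ?thesis
        using pauli_Z_stabilizes_corrected_state[of b \<phi> c Y0 W] finite_subset[OF bU finU] nonzero by simp
    qed
  qed
  then show ?thesis using Y0U WU by blast
qed

lemma post_meas_stabilized_by_lifted_paulis:
  fixes \<psi> :: "'v state" and Ops :: "('v set \<times> 'v set) set"
  assumes finV: "finite V" and UV: "U \<subseteq> V"
    and lifted: "\<And>a b. (a, b) \<in> Ops \<Longrightarrow> a \<subseteq> U \<and> b \<subseteq> U \<and> (a = {} \<or> b = {})
      \<and> (\<exists>\<alpha> \<subseteq> V - U. pauli (a \<union> \<alpha>) b \<psi> = \<psi>)"
  shows "(\<forall>(a, b)\<in>Ops. \<exists>\<alpha> \<subseteq> V - U. pauli (a \<union> \<alpha>) b \<psi> = \<psi>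
            \<and> (\<forall>s \<subseteq> V - U. pauli a b (post_meas V (V - U) \<psi> s)
                 = (\<lambda>Y. (-1) ^ card (s \<inter> \<alpha>) * post_meas V (V - U) \<psi> s Y)))
    \<and> (\<forall>s \<subseteq> V - U. \<exists>Y0 W. Y0 \<subseteq> U \<and> W \<subseteq> U
        \<and> (\<forall>(a, b)\<in>Ops. pauli a b (pauli Y0 W (post_meas V (V - U) \<psi> s))
             = pauli Y0 W (post_meas V (V - U) \<psi> s)))"
    (is "?eigen \<and> ?correction")
proof
  let ?\<phi> = "post_meas V (V - U) \<psi>"
  have unmeasured: "V - (V - U) = U" using UV by blast
  have eigen: "\<exists>\<alpha> \<subseteq> V - U. pauli (a \<union> \<alpha>) b \<psi> = \<psi>
      \<and> (\<forall>s \<subseteq> V - U. pauli a b (?\<phi> s) = (\<lambda>Y. (-1) ^ card (s \<inter> \<alpha>) * ?\<phi> s Y))"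
    if ab: "(a, b) \<in> Ops" for a b
  proof -
    obtain \<alpha> where \<alpha>: "\<alpha> \<subseteq> V - U" "pauli (a \<union> \<alpha>) b \<psi> = \<psi>"
      using lifted[OF ab] by blast
    have "pauli a b (?\<phi> s) = (\<lambda>Y. (-1) ^ card (s \<inter> \<alpha>) * ?\<phi> s Y)" if "s \<subseteq> V - U" for s
      using post_meas_pauli_eigenvector[of "V - U" a V b \<alpha> s \<psi>] finV lifted[OF ab] \<alpha> that
      unfolding unmeasured by simp
    with \<alpha> show ?thesis by blast
  qed
  then show ?eigen by blast
  show ?correction
  proof (intro allI impI)
    fix s assume "s \<subseteq> V - U"
    show "\<exists>Y0 W. Y0 \<subseteq> U \<and> W \<subseteq> U
        \<and> (\<forall>(a, b)\<in>Ops. pauli a b (pauli Y0 W (?\<phi> s)) = pauli Y0 W (?\<phi> s))"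
    proof (rule pauli_correction_exists)
      show "finite U" using finite_subset[OF UV finV] .
      show "\<forall>Y. \<not> Y \<subseteq> U \<longrightarrow> ?\<phi> s Y = 0"
        unfolding post_meas_def unmeasured by simp
      fix a b assume ab: "(a, b) \<in> Ops"
      have "\<exists>c. pauli a b (?\<phi> s) = (\<lambda>Y. c * ?\<phi> s Y)"
        using eigen[OF ab] \<open>s \<subseteq> V - U\<close> by blast
      with lifted[OF ab] show "a \<subseteq> U \<and> b \<subseteq> U \<and> (a = {} \<or> b = {})
          \<and> (\<exists>c. pauli a b (?\<phi> s) = (\<lambda>Y. c * ?\<phi> s Y))" by blast
    qed
  qed
qed

text \<open>The edge relation of atg_E, in a form the simplifier evaluates on concrete vertices.\<close>
fun atg_adj :: "(nat \<Rightarrow> nat \<Rightarrow> bool) \<Rightarrow> (nat \<Rightarrow> nat \<Rightarrow> bool) \<Rightarrow> nat \<Rightarrow> nat \<Rightarrow> nat \<Rightarrow> nat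
    \<Rightarrow> vtx \<Rightarrow> vtx \<Rightarrow> bool" where
  "atg_adj HX HZ n mx mz T (Qv i s) (Qv i' s') = (i = i' \<and> i < n \<and>
     ((s' = s + 1 \<and> 1 \<le> s \<and> s \<le> 2*T) \<or> (s = s' + 1 \<and> 1 \<le> s' \<and> s' \<le> 2*T)))"
| "atg_adj HX HZ n mx mz T (Qv i s) (Zv c s') =
     (s = s' \<and> i < n \<and> c < mz \<and> odd s \<and> 1 \<le> s \<and> s \<le> 2*T+1 \<and> HZ c i)"
| "atg_adj HX HZ n mx mz T (Zv c s') (Qv i s) =
     (s = s' \<and> i < n \<and> c < mz \<and> odd s \<and> 1 \<le> s \<and> s \<le> 2*T+1 \<and> HZ c i)"
| "atg_adj HX HZ n mx mz T (Qv i s) (Xv c s') =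
     (s = s' \<and> i < n \<and> c < mx \<and> even s \<and> 1 \<le> s \<and> s \<le> 2*T \<and> HX c i)"
| "atg_adj HX HZ n mx mz T (Xv c s') (Qv i s) =
     (s = s' \<and> i < n \<and> c < mx \<and> even s \<and> 1 \<le> s \<and> s \<le> 2*T \<and> HX c i)"
| "atg_adj HX HZ n mx mz T (Zv c s) (Zv c' s') = False"
| "atg_adj HX HZ n mx mz T (Zv c s) (Xv c' s') = False"
| "atg_adj HX HZ n mx mz T (Xv c s) (Zv c' s') = False"
| "atg_adj HX HZ n mx mz T (Xv c s) (Xv c' s') = False"

lemma atg_edge_iff: "{w, v} \<in> atg_E HX HZ n mx mz T \<longleftrightarrow> atg_adj HX HZ n mx mz T w v"
proof
  assume "{w, v} \<in> atg_E HX HZ n mx mz T"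
  then show "atg_adj HX HZ n mx mz T w v"
    unfolding atg_E_def by (auto simp: doubleton_eq_iff)
next
  assume "atg_adj HX HZ n mx mz T w v"
  then show "{w, v} \<in> atg_E HX HZ n mx mz T"
    by (cases w; cases v) (auto simp: atg_E_def doubleton_eq_iff insert_commute)
qed

lemma atg_E_doubletons: "\<forall>e\<in>atg_E HX HZ n mx mz T. \<exists>u u'. u \<noteq> u' \<and> e = {u, u'}"
  unfolding atg_E_def by (auto; (rule exI, rule exI, rule conjI[OF _ refl]); simp)

lemma finite_atg_V: "finite (atg_V n mx mz T)"
proof -
  have "atg_V n mx mz T \<subseteq> (\<lambda>(i, t). Qv i t) ` ({..<n} \<times> {..2*T+1})
      \<union> (\<lambda>(c, t). Zv c t) ` ({..<mz} \<times> {..2*T+1}) \<union> (\<lambda>(c, t). Xv c t) ` ({..<mx} \<times> {..2*T+1})"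
    unfolding atg_V_def by auto
  then show ?thesis by (rule finite_subset) auto
qed

lemma finite_atg_E: "finite (atg_E HX HZ n mx mz T)"
proof -
  have "atg_E HX HZ n mx mz T \<subseteq> Pow (atg_V n mx mz T)"
    unfolding atg_E_def atg_V_def by auto
  then show ?thesis using finite_atg_V by (simp add: finite_subset)
qed

lemma atg_state_stabilizer:
  assumes "A \<subseteq> atg_V n mx mz T" and "B \<subseteq> atg_V n mx mz T"
    and "\<forall>u\<in>A. \<forall>v\<in>A. \<not> atg_adj HX HZ n mx mz T u v"
    and "\<forall>w\<in>atg_V n mx mz T. w \<in> B \<longleftrightarrow> odd (card {v\<in>A. atg_adj HX HZ n mx mz T w v})"
  shows "pauli A B (atg_state HX HZ n mx mz T) = atg_state HX HZ n mx mz T"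
  unfolding atg_state_def
  by (rule graph_state_stabilizer[OF finite_atg_V finite_atg_E atg_E_doubletons])
    (use assms in \<open>simp_all add: atg_edge_iff\<close>)

lemma card_doubleton_Int: "x \<noteq> y \<Longrightarrow> card ({x, y} \<inter> L) = of_bool (x \<in> L) + of_bool (y \<in> L)"
  by (cases "x \<in> L"; cases "y \<in> L") auto

lemma inj_on_Qv: "inj_on (\<lambda>i. Qv i t) I" "inj_on (\<lambda>t. Qv i t) L"
  by (auto intro: inj_onI)

lemma atg_stabilizer_Z_check:
  assumes "c < mz" and "odd t" "1 \<le> t" "t \<le> 2*T+1"
  shows "pauli {Zv c t} {Qv i t | i. i < n \<and> HZ c i} (atg_state HX HZ n mx mz T)
    = atg_state HX HZ n mx mz T"
proof (rule atg_state_stabilizer)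
  show "{Zv c t} \<subseteq> atg_V n mx mz T" and "{Qv i t | i. i < n \<and> HZ c i} \<subseteq> atg_V n mx mz T"
    using assms unfolding atg_V_def by auto
  show "\<forall>u\<in>{Zv c t}. \<forall>v\<in>{Zv c t}. \<not> atg_adj HX HZ n mx mz T u v" by simp
  show "\<forall>w\<in>atg_V n mx mz T. w \<in> {Qv i t | i. i < n \<and> HZ c i}
      \<longleftrightarrow> odd (card {v\<in>{Zv c t}. atg_adj HX HZ n mx mz T w v})"
  proof
    fix w
    have eq: "{v\<in>{Zv c t}. atg_adj HX HZ n mx mz T w v}
        = (if atg_adj HX HZ n mx mz T w (Zv c t) then {Zv c t} else {})"
      by auto
    show "w \<in> {Qv i t | i. i < n \<and> HZ c i}
        \<longleftrightarrow> odd (card {v\<in>{Zv c t}. atg_adj HX HZ n mx mz T w v})"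
      unfolding eq using assms by (cases w) simp_all
  qed
qed

definition layer_boundary :: "nat \<Rightarrow> nat set \<Rightarrow> nat set" where
  "layer_boundary T L = {s. 1 \<le> s \<and> s \<le> 2*T+1 \<and> odd (card ({s - 1, s + 1} \<inter> L))}"

lemma atg_stabilizer_qubit_block:
  assumes \<alpha>: "\<alpha> \<subseteq> {..<n}" and L: "L \<subseteq> {1..2*T+1}"
    and same_parity: "\<forall>s\<in>L. \<forall>s'\<in>L. even (s + s')"
    and Z_commute: "\<And>c s. c < mz \<Longrightarrow> s \<in> L \<Longrightarrow> odd s \<Longrightarrow> even (card {i\<in>\<alpha>. HZ c i})"
    and X_commute: "\<And>c s. c < mx \<Longrightarrow> s \<in> L \<Longrightarrow> even s \<Longrightarrow> even (card {i\<in>\<alpha>. HX c i})"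
  shows "pauli {Qv i s | i s. i \<in> \<alpha> \<and> s \<in> L} {Qv i s | i s. i \<in> \<alpha> \<and> s \<in> layer_boundary T L}
      (atg_state HX HZ n mx mz T) = atg_state HX HZ n mx mz T"
    (is "pauli ?A ?B _ = _")
proof (rule atg_state_stabilizer)
  let ?adj = "atg_adj HX HZ n mx mz T"
  show "?A \<subseteq> atg_V n mx mz T" and "?B \<subseteq> atg_V n mx mz T"
    using \<alpha> L unfolding atg_V_def layer_boundary_def by (auto simp: subset_iff)
  show "\<forall>u\<in>?A. \<forall>v\<in>?A. \<not> ?adj u v"
    using same_parity by fastforce
  show "\<forall>w\<in>atg_V n mx mz T. w \<in> ?B \<longleftrightarrow> odd (card {v\<in>?A. ?adj w v})"
  proof
    fix w assume w: "w \<in> atg_V n mx mz T"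
    show "w \<in> ?B \<longleftrightarrow> odd (card {v\<in>?A. ?adj w v})"
    proof (cases w)
      case (Qv i s)
      with w have "i < n" "1 \<le> s" "s \<le> 2*T+1" unfolding atg_V_def by auto
      moreover have "0 \<notin> L" using L by auto
      ultimately have "{v\<in>?A. ?adj w v}
          = (if i \<in> \<alpha> then (\<lambda>s'. Qv i s') ` ({s - 1, s + 1} \<inter> L) else {})"
        using L unfolding Qv by auto
      with Qv \<open>1 \<le> s\<close> \<open>s \<le> 2*T+1\<close> show ?thesis
        by (simp add: card_image[OF inj_on_Qv(2)] layer_boundary_def)
    next
      case (Zv c s)
      with w have "c < mz" "odd s" unfolding atg_V_def by auto
      then have "{v\<in>?A. ?adj w v} = (if s \<in> L then (\<lambda>i. Qv i s) ` {i\<in>\<alpha>. HZ c i} else {})"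
        using Zv \<alpha> L by (auto simp: subset_iff)
      with Zv \<open>c < mz\<close> \<open>odd s\<close> show ?thesis
        by (simp add: card_image[OF inj_on_Qv(1)] Z_commute)
    next
      case (Xv c s)
      with w have "c < mx" "even s" "s \<le> 2*T" unfolding atg_V_def by auto
      then have "{v\<in>?A. ?adj w v} = (if s \<in> L then (\<lambda>i. Qv i s) ` {i\<in>\<alpha>. HX c i} else {})"
        using Xv \<alpha> L by (auto simp: subset_iff)
      with Xv \<open>c < mx\<close> \<open>even s\<close> show ?thesis
        by (simp add: card_image[OF inj_on_Qv(1)] X_commute)
    qed
  qed
qed

lemma atg_stabilizer_X_check:
  assumes orth: "css_orthogonal HX HZ mx mz n"
    and c: "c < mx" and t: "odd t" "1 \<le> t" "t \<le> 2*T+1"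
  shows "pauli ({Qv i t | i. i < n \<and> HX c i}
      \<union> {Xv c s | s. (s + 1 = t \<or> s = t + 1) \<and> 1 \<le> s \<and> s \<le> 2*T}) {}
    (atg_state HX HZ n mx mz T) = atg_state HX HZ n mx mz T"
    (is "pauli ?A _ _ = _")
proof (rule atg_state_stabilizer)
  let ?adj = "atg_adj HX HZ n mx mz T"
  show "?A \<subseteq> atg_V n mx mz T" using c t unfolding atg_V_def by auto
  show "{} \<subseteq> atg_V n mx mz T" by simp
  show "\<forall>u\<in>?A. \<forall>v\<in>?A. \<not> ?adj u v" using t by auto
  show "\<forall>w\<in>atg_V n mx mz T. w \<in> {} \<longleftrightarrow> odd (card {v\<in>?A. ?adj w v})"
  proof
    fix w assume w: "w \<in> atg_V n mx mz T"
    show "w \<in> {} \<longleftrightarrow> odd (card {v\<in>?A. ?adj w v})"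
    proof (cases w)
      case (Qv i s)
      with w have "i < n" "1 \<le> s" "s \<le> 2*T+1" unfolding atg_V_def by auto
      with t have "{v\<in>?A. ?adj w v}
          = (if HX c i \<and> (s = t + 1 \<or> s + 1 = t) then {Qv i t, Xv c s} else {})"
        unfolding Qv using c by auto presburger+
      then show ?thesis by simp
    next
      case (Zv c' s)
      with w have "c' < mz" unfolding atg_V_def by auto
      have "{v\<in>?A. ?adj w v}
          = (if s = t then (\<lambda>i. Qv i t) ` {i\<in>{..<n}. HX c i \<and> HZ c' i} else {})"
        using Zv w t unfolding atg_V_def by auto
      moreover have "even (card {i\<in>{..<n}. HX c i \<and> HZ c' i})"
        using orth c \<open>c' < mz\<close> unfolding css_orthogonal_def by blast
      ultimately show ?thesis by (simp add: card_image[OF inj_on_Qv(1)])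
    next
      case (Xv c' s)
      then have "{v\<in>?A. ?adj w v} = {}" using t by auto
      then show ?thesis by (simp only:) simp
    qed
  qed
qed

lemma layer_boundary_odd_layers: "layer_boundary T {s. odd s \<and> 1 \<le> s \<and> s \<le> 2*T+1} = {}"
proof -
  have "even (card ({s - 1, s + 1} \<inter> {s. odd s \<and> 1 \<le> s \<and> s \<le> 2*T+1}))"
    if "1 \<le> s" "s \<le> 2*T+1" for s
    using that by (cases "even s") (auto simp: card_doubleton_Int)
  then show ?thesis unfolding layer_boundary_def by blast
qed

lemma layer_boundary_even_layers_between:
  assumes t: "odd t" "odd t'" "1 \<le> t" "t < t'" "t' \<le> 2*T+1"
  shows "layer_boundary T {s. even s \<and> t < s \<and> s < t'} = {t, t'}"
proof -
  obtain a b where ab: "t = 2*a + 1" "t' = 2*b + 1" using t by (auto elim!: oddE)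
  have "odd (card ({s - 1, s + 1} \<inter> {s. even s \<and> t < s \<and> s < t'})) \<longleftrightarrow> s = t \<or> s = t'"
    if "1 \<le> s" for s
  proof (cases "even s")
    case True
    then show ?thesis using t by (auto simp: card_doubleton_Int)
  next
    case False
    then obtain d where "s = 2*d + 1" by (auto elim!: oddE)
    then show ?thesis using t unfolding ab by (auto simp: card_doubleton_Int)
  qed
  moreover have "t \<le> 2*T+1" "1 \<le> t'" using t by auto
  ultimately show ?thesis using t unfolding layer_boundary_def by blast
qed

lemma atg_stabilizer_logical_X:
  assumes \<alpha>: "\<alpha> \<subseteq> {..<n}" and Z_commute: "\<forall>c<mz. even (card {i\<in>\<alpha>. HZ c i})"
  shows "pauli {Qv i s | i s. i \<in> \<alpha> \<and> odd s \<and> 1 \<le> s \<and> s \<le> 2*T+1} {}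
    (atg_state HX HZ n mx mz T) = atg_state HX HZ n mx mz T"
proof -
  let ?L = "{s. odd s \<and> 1 \<le> s \<and> s \<le> 2*T+1}"
  have "pauli {Qv i s | i s. i \<in> \<alpha> \<and> s \<in> ?L} {Qv i s | i s. i \<in> \<alpha> \<and> s \<in> layer_boundary T ?L}
      (atg_state HX HZ n mx mz T) = atg_state HX HZ n mx mz T"
    by (rule atg_stabilizer_qubit_block) (use \<alpha> Z_commute in auto)
  then show ?thesis unfolding layer_boundary_odd_layers by simp
qed

lemma atg_stabilizer_logical_Z:
  assumes \<alpha>: "\<alpha> \<subseteq> {..<n}" and X_commute: "\<forall>c<mx. even (card {i\<in>\<alpha>. HX c i})"
    and t: "odd t" "odd t'" "1 \<le> t" "t < t'" "t' \<le> 2*T+1"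
  shows "pauli {Qv i s | i s. i \<in> \<alpha> \<and> even s \<and> t < s \<and> s < t'}
    ({Qv i t | i. i \<in> \<alpha>} \<union> {Qv i t' | i. i \<in> \<alpha>}) (atg_state HX HZ n mx mz T) = atg_state HX HZ n mx mz T"
proof -
  let ?L = "{s. even s \<and> t < s \<and> s < t'}"
  have "pauli {Qv i s | i s. i \<in> \<alpha> \<and> s \<in> ?L} {Qv i s | i s. i \<in> \<alpha> \<and> s \<in> layer_boundary T ?L}
      (atg_state HX HZ n mx mz T) = atg_state HX HZ n mx mz T"
    by (rule atg_stabilizer_qubit_block) (use \<alpha> X_commute t in auto)
  moreover have "{Qv i s | i s. i \<in> \<alpha> \<and> s \<in> {t, t'}} = {Qv i t | i. i \<in> \<alpha>} \<union> {Qv i t' | i. i \<in> \<alpha>}"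
    by blast
  ultimately show ?thesis unfolding layer_boundary_even_layers_between[OF t] by simp
qed

lemma Qv_mem_unmeasured [simp]:
  "Qv i s \<in> unmeasured n m lay \<longleftrightarrow> i < n \<and> (\<exists>j. 1 \<le> j \<and> j \<le> m \<and> s = lay j)"
  unfolding unmeasured_def by auto

lemma check_vertices_not_unmeasured [simp]:
  "Zv c t \<notin> unmeasured n m lay" "Xv c t \<notin> unmeasured n m lay"
  unfolding unmeasured_def by auto

lemma layers_mono:
  fixes lay :: "nat \<Rightarrow> 'a::order"
  assumes incr: "\<forall>j. 1 \<le> j \<and> j < m \<longrightarrow> lay j < lay (j+1)"
    and "1 \<le> j" "j \<le> j'" "j' \<le> m"
  shows "lay j \<le> lay j'"
  using \<open>j \<le> j'\<close> \<open>j' \<le> m\<close>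
proof (induction j' rule: dec_induct)
  case base
  then show ?case by simp
next
  case (step k)
  then have "lay j \<le> lay k" by simp
  also have "lay k < lay (k+1)" using incr step \<open>1 \<le> j\<close> by simp
  finally show ?case by simp
qed

lemma unmeasured_subset_atg_V:
  assumes "\<And>j. 1 \<le> j \<Longrightarrow> j \<le> m \<Longrightarrow> 1 \<le> lay j \<and> lay j \<le> 2*T+1"
  shows "unmeasured n m lay \<subseteq> atg_V n mx mz T"
  using assms unfolding unmeasured_def atg_V_def by fastforce

lemma ghz_opsE [consumes 1, case_names X_check Z_check logical_X logical_Z]:
  assumes "(a, b) \<in> ghz_ops HX HZ n mx mz m lay"
  obtains (X_check) c j where "c < mx" "1 \<le> j" "j \<le> m"
      "a = {Qv i (lay j) | i. i < n \<and> HX c i}" "b = {}"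
  | (Z_check) c j where "c < mz" "1 \<le> j" "j \<le> m"
      "a = {}" "b = {Qv i (lay j) | i. i < n \<and> HZ c i}"
  | (logical_X) \<alpha> where "logical_X_support HX HZ mx mz n \<alpha>"
      "a = {Qv i (lay j) | i j. i \<in> \<alpha> \<and> 1 \<le> j \<and> j \<le> m}" "b = {}"
  | (logical_Z) \<alpha> j where "logical_Z_support HX HZ mx mz n \<alpha>" "1 \<le> j" "j < m"
      "a = {}" "b = {Qv i (lay j) | i. i \<in> \<alpha>} \<union> {Qv i (lay (j+1)) | i. i \<in> \<alpha>}"
  using assms unfolding ghz_ops_def by blast

lemma ghz_ops_supported:
  assumes "(a, b) \<in> ghz_ops HX HZ n mx mz m lay"
  shows "a \<subseteq> unmeasured n m lay \<and> b \<subseteq> unmeasured n m lay \<and> (a = {} \<or> b = {})"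
  using assms
proof (cases rule: ghz_opsE)
  case (logical_X \<alpha>)
  then show ?thesis unfolding logical_X_support_def by auto
next
  case (logical_Z \<alpha> j)
  then have "\<alpha> \<subseteq> {..<n}" unfolding logical_Z_support_def by blast
  then have "{Qv i (lay j') | i. i \<in> \<alpha>} \<subseteq> unmeasured n m lay" if "1 \<le> j'" "j' \<le> m" for j'
    using that by force
  with logical_Z show ?thesis by simp
qed auto

lemma ghz_op_lifts_to_atg_stabilizer:
  assumes code: "css_code HX HZ mx mz n"
    and layer: "\<And>j. 1 \<le> j \<Longrightarrow> j \<le> m \<Longrightarrow> odd (lay j) \<and> 1 \<le> lay j \<and> lay j \<le> 2*T+1"
    and incr: "\<forall>j. 1 \<le> j \<and> j < m \<longrightarrow> lay j < lay (j+1)"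
    and op: "(a, b) \<in> ghz_ops HX HZ n mx mz m lay"
  shows "\<exists>\<alpha> \<subseteq> atg_V n mx mz T - unmeasured n m lay.
    pauli (a \<union> \<alpha>) b (atg_state HX HZ n mx mz T) = atg_state HX HZ n mx mz T"
  using op
proof (cases rule: ghz_opsE)
  case (X_check c j)
  let ?\<alpha> = "{Xv c s | s. (s + 1 = lay j \<or> s = lay j + 1) \<and> 1 \<le> s \<and> s \<le> 2*T}"
  have "odd (lay j)" "1 \<le> lay j" "lay j \<le> 2*T+1" using layer X_check by auto
  moreover have "?\<alpha> \<subseteq> atg_V n mx mz T - unmeasured n m lay"
    using X_check calculation unfolding atg_V_def by auto presburger+
  moreover have "css_orthogonal HX HZ mx mz n" using code unfolding css_code_def by blast
  ultimately show ?thesis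
    using atg_stabilizer_X_check[of HX HZ mx mz n c "lay j" T] X_check by blast
next
  case (Z_check c j)
  have "odd (lay j)" "1 \<le> lay j" "lay j \<le> 2*T+1" using layer Z_check by auto
  moreover have "{Zv c (lay j)} \<subseteq> atg_V n mx mz T - unmeasured n m lay"
    using Z_check calculation unfolding atg_V_def by auto
  ultimately show ?thesis
    using atg_stabilizer_Z_check[of c mz "lay j" T n HZ HX mx] Z_check by (metis Un_empty_left)
next
  case (logical_X \<alpha>)
  have \<alpha>: "\<alpha> \<subseteq> {..<n}" "\<forall>c<mz. even (card {i\<in>\<alpha>. HZ c i})"
    using logical_X unfolding logical_X_support_def by auto
  let ?rest = "{Qv i s | i s. i \<in> \<alpha> \<and> odd s \<and> 1 \<le> s \<and> s \<le> 2*T+1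
    \<and> (\<forall>j. 1 \<le> j \<and> j \<le> m \<longrightarrow> s \<noteq> lay j)}"
  have "a \<union> ?rest = {Qv i s | i s. i \<in> \<alpha> \<and> odd s \<and> 1 \<le> s \<and> s \<le> 2*T+1}"
    using logical_X layer by auto
  then have "pauli (a \<union> ?rest) b (atg_state HX HZ n mx mz T) = atg_state HX HZ n mx mz T"
    using atg_stabilizer_logical_X[OF \<alpha>, of T HX mx] logical_X by simp
  moreover have "?rest \<subseteq> atg_V n mx mz T - unmeasured n m lay"
    using \<alpha> unfolding atg_V_def by auto
  ultimately show ?thesis by blast
next
  case (logical_Z \<alpha> j)
  have \<alpha>: "\<alpha> \<subseteq> {..<n}" "\<forall>c<mx. even (card {i\<in>\<alpha>. HX c i})"
    using logical_Z unfolding logical_Z_support_def by auto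
  have t: "odd (lay j)" "odd (lay (j+1))" "1 \<le> lay j" "lay j < lay (j+1)" "lay (j+1) \<le> 2*T+1"
    using layer[of j] layer[of "j+1"] incr logical_Z by auto
  let ?between = "{Qv i s | i s. i \<in> \<alpha> \<and> even s \<and> lay j < s \<and> s < lay (j+1)}"
  have "?between \<subseteq> atg_V n mx mz T - unmeasured n m lay"
    using \<alpha> t layer unfolding atg_V_def by fastforce
  then show ?thesis
    using atg_stabilizer_logical_Z[OF \<alpha> t, of HZ mz] logical_Z by auto
qed

theorem claimC1:
  fixes HX HZ :: "nat \<Rightarrow> nat \<Rightarrow> bool" and n mx mz T m :: nat and lay :: "nat \<Rightarrow> nat"
  assumes code: "css_code HX HZ mx mz n"
    and T: "T \<ge> 1"
    and m: "m \<ge> 1"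
    and first: "lay 1 = 1" and last: "lay m = 2*T+1"
    and incr: "\<forall>j. 1 \<le> j \<and> j < m \<longrightarrow> lay j < lay (j+1)"
    and odd_lay: "\<forall>j. 1 \<le> j \<and> j \<le> m \<longrightarrow> odd (lay j)"
  defines "V \<equiv> atg_V n mx mz T"
    and "U \<equiv> unmeasured n m lay"
    and "M \<equiv> atg_V n mx mz T - unmeasured n m lay"
    and "\<psi> \<equiv> atg_state HX HZ n mx mz T"
  shows
    "(\<forall>(a, b) \<in> ghz_ops HX HZ n mx mz m lay.
        \<exists>\<alpha> \<subseteq> M.
          pauli (a \<union> \<alpha>) b \<psi> = \<psi>
        \<and> (\<forall>s \<subseteq> M. pauli a b (post_meas V M \<psi> s)
                     = (\<lambda>Y. (-1) ^ card (s \<inter> \<alpha>) * post_meas V M \<psi> s Y)))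
   \<and> (\<forall>s \<subseteq> M. \<exists>a b. a \<subseteq> U \<and> b \<subseteq> U \<and>
        is_encoded_ghz HX HZ n mx mz m lay (pauli a b (post_meas V M \<psi> s)))"
proof -
  have layer: "odd (lay j) \<and> 1 \<le> lay j \<and> lay j \<le> 2*T+1" if "1 \<le> j" "j \<le> m" for j
    using layers_mono[OF incr, of 1 j] layers_mono[OF incr, of j m] first last odd_lay that by auto
  have "unmeasured n m lay \<subseteq> atg_V n mx mz T"
    using layer by (intro unmeasured_subset_atg_V) blast
  moreover have "a \<subseteq> unmeasured n m lay \<and> b \<subseteq> unmeasured n m lay \<and> (a = {} \<or> b = {})
      \<and> (\<exists>\<alpha> \<subseteq> atg_V n mx mz T - unmeasured n m lay.
            pauli (a \<union> \<alpha>) b (atg_state HX HZ n mx mz T) = atg_state HX HZ n mx mz T)"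
    if "(a, b) \<in> ghz_ops HX HZ n mx mz m lay" for a b
    using ghz_ops_supported[OF that] ghz_op_lifts_to_atg_stabilizer[OF code layer incr that] by blast
  ultimately show ?thesis
    unfolding V_def U_def M_def \<psi>_def is_encoded_ghz_def
    by (rule post_meas_stabilized_by_lifted_paulis[OF finite_atg_V])
qed

end
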